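(* Let $\beta>0$ and let $V\in\mathbb R^{d\times d}$ be real symmetric with orthonormal eigenbasis $(e_k)_{k=1}^d$ and eigenvalues $(\lambda_k)$ satisfying $\lambda_1>\max_{k\ge2}|\lambda_k|$. Let $x_i(t)\in\mathbb S^{d-1}$, $i\in[n]$, solve \[ \dot x_i=P^\perp_{x_i}\Big(\frac1{Z_i}\sum_{j=1}^n e^{\beta\langle x_i,Vx_j\rangle}Vx_j\Big),\qquad Z_i=\sum_{k=1}^n e^{\beta\langle x_i,Vx_k\rangle}, \] and write $c_{i,k}(t)=\langle x_i(t),e_k\rangle$. Suppose there is $\delta>0$ with $c_{i,1}(0)\ge\delta$ for all $i\in[n]$. Then: (1) The cone $\mathcal C_\delta:=\{(x_i)_{i=1}^n\in(\mathbb S^{d-1})^n: c_{i,1}\ge\delta\ \forall i\in[n]\}$ is forward invariant. (2) For every $k\neq1$, setting $r_{i,k}(t)=c_{i,k}(t)/c_{i,1}(t)$ and $R_k(t)=\max_{1\le i\le n}|r_{i,k}(t)|$, one has $R_k(t)\le R_k(0)e^{-\delta(\lambda_1-|\lambda_k|)t}$ for all $t\ge0$. (3) For every $i\in[n]$, $x_i(t)\to e_1$ as $t\to\infty$.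
   Context: $P^\perp_xy=y-\langle x,y\rangle x$ denotes the orthogonal projection onto $T_x\mathbb S^{d-1}$. *)

theory Defs
  imports "HOL-Analysis.Analysis"
begin

definition tproj :: "real^'d \<Rightarrow> real^'d \<Rightarrow> real^'d" where
  "tproj x y = y - (x \<bullet> y) *\<^sub>R x"

definition attnZ :: "real \<Rightarrow> real^'d^'d \<Rightarrow> nat \<Rightarrow> (nat \<Rightarrow> real^'d) \<Rightarrow> nat \<Rightarrow> real" where
  "attnZ \<beta> V n y i = (\<Sum>k<n. exp (\<beta> * (y i \<bullet> (V *v y k))))"

definition attn_field :: "real \<Rightarrow> real^'d^'d \<Rightarrow> nat \<Rightarrow> (nat \<Rightarrow> real^'d) \<Rightarrow> nat \<Rightarrow> real^'d" where
  "attn_field \<beta> V n y i =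
     tproj (y i) ((1 / attnZ \<beta> V n y i) *\<^sub>R
        (\<Sum>j<n. exp (\<beta> * (y i \<bullet> (V *v y j))) *\<^sub>R (V *v y j)))"

end

(* Everything rests on a maximum principle for finitely many differentiable functions of time:
   if each of them has nonpositive derivative whenever it is the largest, none of them ever exceeds
   its initial bound.  For the cone, apply it to -c_{i,1}: at a particle minimising c_{i,1} the
   softmax average of the c_{j,1} is at least c_{i,1}, and the mean energy sum_j a_ij <x_i, V x_j>
   is at most lambda_1, so c_{i,1} cannot decrease.  Inside the cone the self-interaction term
   cancels from the ratios r_{i,k} = c_{i,k} / c_{i,1}, leaving
     r_{i,k}' = (1 / c_{i,1}) sum_j a_ij c_{j,1} (lambda_k r_{j,k} - lambda_1 r_{i,k}),
   so wherever |r_{i,k}| is maximal it decreases at relative rate at least delta (lambda_1 - |lambda_k|);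
   the maximum principle for e^{mu t} r_{i,k} and its negative gives the exponential bound.  Hence
   c_{i,k} -> 0 for k <> 1, c_{i,1} -> 1 because x_i stays on the sphere, and x_i -> e_1. *)

theory Submission
  imports Defs "HOL-Real_Asymp.Real_Asymp"
begin

lemma real_induction_nonneg:
  fixes P :: "real \<Rightarrow> bool"
  assumes left: "\<And>s. 0 \<le> s \<Longrightarrow> \<forall>t\<in>{0..<s}. P t \<Longrightarrow> P s"
    and right: "\<And>s. 0 \<le> s \<Longrightarrow> \<forall>t\<in>{0..s}. P t \<Longrightarrow> eventually P (at_right s)"
    and "0 \<le> t"
  shows "P t"
proof (rule ccontr)
  assume "\<not> P t"
  define S where "S = {u. 0 \<le> u \<and> \<not> P u}"
  have "t \<in> S" using \<open>0 \<le> t\<close> \<open>\<not> P t\<close> by (simp add: S_def)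
  have bdd: "bdd_below S" by (rule bdd_belowI[of _ 0]) (simp add: S_def)
  define s where "s = Inf S"
  have "0 \<le> s" unfolding s_def using \<open>t \<in> S\<close> by (intro cInf_greatest) (auto simp: S_def)
  have below: "P u" if "0 \<le> u" "u < s" for u
    using cInf_lower[OF _ bdd, of u] that by (force simp: S_def s_def)
  then have "P s" using left \<open>0 \<le> s\<close> by simp
  with below have "eventually P (at_right s)"
    using right \<open>0 \<le> s\<close> by (metis atLeastAtMost_iff order_le_less)
  then obtain b where "s < b" and b: "\<And>u. s < u \<Longrightarrow> u < b \<Longrightarrow> P u"
    by (auto simp: eventually_at_right_field)
  have "b \<le> s" unfolding s_def
  proof (rule cInf_greatest)
    show "S \<noteq> {}" using \<open>t \<in> S\<close> by blast
    show "b \<le> u" if "u \<in> S" for u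
      using that below b \<open>P s\<close> by (force simp: S_def not_less)
  qed
  with \<open>s < b\<close> show False by simp
qed

lemma continuous_le_from_left:
  fixes f :: "real \<Rightarrow> real"
  assumes "continuous (at s within {a..}) f" "a < s" and le: "\<And>t. a \<le> t \<Longrightarrow> t < s \<Longrightarrow> f t \<le> c"
  shows "f s \<le> c"
proof (rule tendsto_upperbound)
  have left: "at_left s = at s within {a..s}"
    using \<open>a < s\<close> by (simp add: at_within_Icc_at_left)
  then show "(f \<longlongrightarrow> f s) (at_left s)"
    using assms(1) by (auto simp: continuous_within intro: tendsto_within_subset)
  show "eventually (\<lambda>t. f t \<le> c) (at_left s)"
    unfolding left eventually_at_filter using le by (intro always_eventually) auto
qed simp

lemma eventually_le_linear_at_right:
  fixes f :: "real \<Rightarrow> real"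
  assumes deriv: "(f has_real_derivative f') (at s within {s..})"
    and "f s \<le> c" and touching: "f s = c \<Longrightarrow> f' < m"
  shows "eventually (\<lambda>t. f t \<le> c + m * (t - s)) (at_right s)"
proof (cases "f s < c")
  case True
  have "(f \<longlongrightarrow> f s) (at_right s)"
    using DERIV_continuous[OF deriv] by (auto simp: continuous_within intro: tendsto_within_subset)
  then have "((\<lambda>t. f t - m * (t - s)) \<longlongrightarrow> f s - m * (s - s)) (at_right s)"
    by (intro tendsto_intros)
  then have "eventually (\<lambda>t. f t - m * (t - s) < c) (at_right s)"
    by (rule order_tendstoD) (use True in simp)
  then show ?thesis by eventually_elim simp
next
  case False
  with \<open>f s \<le> c\<close> have "f s = c" by simp
  have "((\<lambda>t. f t - m * t) has_real_derivative f' - m) (at s within {s..})"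
    using deriv by (auto intro!: derivative_eq_intros)
  then have "\<exists>d>0. \<forall>h>0. s + h \<in> {s..} \<longrightarrow> h < d \<longrightarrow> (\<lambda>t. f t - m * t) s > (\<lambda>t. f t - m * t) (s + h)"
    by (rule has_real_derivative_neg_dec_right) (use touching \<open>f s = c\<close> in simp)
  then obtain d where "0 < d" and d: "\<And>h. 0 < h \<Longrightarrow> h < d \<Longrightarrow> f (s + h) - m * (s + h) < c - m * s"
    using \<open>f s = c\<close> by auto
  show ?thesis unfolding eventually_at_right_field
  proof (intro exI conjI allI impI)
    show "s < s + d" using \<open>0 < d\<close> by simp
    fix t assume "s < t" "t < s + d"
    then show "f t \<le> c + m * (t - s)" using d[of "t - s"] by (simp add: algebra_simps)
  qed
qed

lemma maximum_principle_barrier: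
  fixes g g' :: "'i \<Rightarrow> real \<Rightarrow> real"
  assumes "finite I"
    and deriv: "\<And>i t. i \<in> I \<Longrightarrow> 0 \<le> t \<Longrightarrow> (g i has_real_derivative g' i t) (at t within {0..})"
    and init: "\<And>i. i \<in> I \<Longrightarrow> g i 0 \<le> K"
    and at_max: "\<And>i t. i \<in> I \<Longrightarrow> 0 \<le> t \<Longrightarrow> \<forall>j\<in>I. g j t \<le> g i t \<Longrightarrow> g i t < K + \<eta>
                   \<Longrightarrow> g' i t \<le> 0"
    and "0 < \<epsilon>" "\<epsilon> * T < \<eta>" and "i \<in> I" "0 \<le> t" "t \<le> T"
  shows "g i t \<le> K + \<epsilon> * t"
proof -
  define P where "P t \<longleftrightarrow> t \<le> T \<longrightarrow> (\<forall>j\<in>I. g j t \<le> K + \<epsilon> * t)" for t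
  have "P t"
  proof (rule real_induction_nonneg[OF _ _ \<open>0 \<le> t\<close>])
    fix s :: real assume "0 \<le> s" and before: "\<forall>t\<in>{0..<s}. P t"
    show "P s"
    proof (cases "s = 0")
      case True then show ?thesis using init by (simp add: P_def)
    next
      case False
      have "g j s - \<epsilon> * s \<le> K" if "j \<in> I" "s \<le> T" for j
      proof (rule continuous_le_from_left[where f = "\<lambda>t. g j t - \<epsilon> * t"])
        show "continuous (at s within {0..}) (\<lambda>t. g j t - \<epsilon> * t)"
          using DERIV_continuous[OF deriv[OF \<open>j \<in> I\<close> \<open>0 \<le> s\<close>]] by (intro continuous_intros)
        fix t assume "0 \<le> t" "t < s"
        then have "g j t \<le> K + \<epsilon> * t" using before \<open>s \<le> T\<close> \<open>j \<in> I\<close> by (simp add: P_def)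
        then show "g j t - \<epsilon> * t \<le> K" by simp
      qed (use False \<open>0 \<le> s\<close> in simp)
      then show ?thesis by (simp add: P_def diff_le_eq add.commute)
    qed
  next
    fix s :: real assume "0 \<le> s" and upto: "\<forall>t\<in>{0..s}. P t"
    show "eventually P (at_right s)"
    proof (cases "s < T")
      case False
      then show ?thesis by (auto simp: P_def eventually_at_right_field intro: exI[of _ "s + 1"])
    next
      case True
      \<comment> \<open>The slack \<open>\<epsilon>\<close> turns \<open>g' j s \<le> 0\<close> into the strict inequality needed
         when \<open>g j\<close> touches the barrier.\<close>
      have "eventually (\<lambda>t. g j t \<le> (K + \<epsilon> * s) + \<epsilon> * (t - s)) (at_right s)" if "j \<in> I" for j
      proof (rule eventually_le_linear_at_right)
        show "(g j has_real_derivative g' j s) (at s within {s..})"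
          by (rule DERIV_subset[OF deriv[OF that \<open>0 \<le> s\<close>]]) (use \<open>0 \<le> s\<close> in auto)
        show "g j s \<le> K + \<epsilon> * s" using upto \<open>0 \<le> s\<close> True that by (auto simp: P_def)
        assume "g j s = K + \<epsilon> * s"
        moreover have "\<epsilon> * s < \<eta>"
          using mult_strict_left_mono[OF \<open>s < T\<close> \<open>0 < \<epsilon>\<close>] \<open>\<epsilon> * T < \<eta>\<close> by linarith
        ultimately have "g' j s \<le> 0"
          using upto \<open>0 \<le> s\<close> True by (intro at_max[OF that \<open>0 \<le> s\<close>]) (auto simp: P_def)
        then show "g' j s < \<epsilon>" using \<open>0 < \<epsilon>\<close> by simp
      qed
      then have "eventually (\<lambda>t. \<forall>j\<in>I. g j t \<le> K + \<epsilon> * t) (at_right s)"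
        using \<open>finite I\<close> by (intro eventually_ball_finite) (auto simp: algebra_simps)
      then show ?thesis by (rule eventually_mono) (simp add: P_def)
    qed
  qed
  then show ?thesis using \<open>i \<in> I\<close> \<open>t \<le> T\<close> by (simp add: P_def)
qed

lemma maximum_principle:
  fixes g g' :: "'i \<Rightarrow> real \<Rightarrow> real"
  assumes "finite I"
    and "\<And>i t. i \<in> I \<Longrightarrow> 0 \<le> t \<Longrightarrow> (g i has_real_derivative g' i t) (at t within {0..})"
    and "\<And>i. i \<in> I \<Longrightarrow> g i 0 \<le> K"
    and "0 < \<eta>"
    and "\<And>i t. i \<in> I \<Longrightarrow> 0 \<le> t \<Longrightarrow> \<forall>j\<in>I. g j t \<le> g i t \<Longrightarrow> g i t < K + \<eta>
                   \<Longrightarrow> g' i t \<le> 0"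
    and "i \<in> I" "0 \<le> t"
  shows "g i t \<le> K"
proof (rule ccontr)
  assume "\<not> g i t \<le> K"
  define M where "M = min \<eta> (g i t - K)"
  define \<epsilon> where "\<epsilon> = M / (t + 1)"
  have "0 < M" using \<open>0 < \<eta>\<close> \<open>\<not> g i t \<le> K\<close> by (simp add: M_def)
  then have "0 < \<epsilon>" using \<open>0 \<le> t\<close> by (simp add: \<epsilon>_def)
  then have "\<epsilon> * t < \<epsilon> * (t + 1)" by simp
  also have "\<dots> = M" using \<open>0 \<le> t\<close> by (simp add: \<epsilon>_def)
  finally have "\<epsilon> * t < \<eta>" "\<epsilon> * t < g i t - K" by (simp_all add: M_def)
  moreover have "g i t \<le> K + \<epsilon> * t"
    using assms \<open>0 < \<epsilon>\<close> \<open>\<epsilon> * t < \<eta>\<close> by (intro maximum_principle_barrier[where T = t]) auto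
  ultimately show False by simp
qed

lemma maximum_principle_abs:
  fixes h h' :: "'i \<Rightarrow> real \<Rightarrow> real"
  assumes "finite I"
    and deriv: "\<And>i t. i \<in> I \<Longrightarrow> 0 \<le> t \<Longrightarrow> (h i has_real_derivative h' i t) (at t within {0..})"
    and init: "\<And>i. i \<in> I \<Longrightarrow> \<bar>h i 0\<bar> \<le> K"
    and at_max: "\<And>i \<sigma> t. i \<in> I \<Longrightarrow> 0 \<le> t \<Longrightarrow> \<bar>\<sigma>\<bar> = 1 \<Longrightarrow> \<forall>j\<in>I. \<bar>h j t\<bar> \<le> \<sigma> * h i t
                   \<Longrightarrow> \<sigma> * h' i t \<le> 0"
    and "i \<in> I" "0 \<le> t"
  shows "\<bar>h i t\<bar> \<le> K"
proof -
  define g where "g = (\<lambda>(j, \<tau>) s. \<tau> * h j s)"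
  define g' where "g' = (\<lambda>(j, \<tau>) s. \<tau> * h' j s)"
  have "g (i, \<sigma>) t \<le> K" if "\<sigma> \<in> {-1, 1}" for \<sigma>
  proof (rule maximum_principle[where I = "I \<times> {-1, 1}" and g = g and g' = g' and \<eta> = 1])
    show "finite (I \<times> {-1, 1})" using \<open>finite I\<close> by simp
    show "(i, \<sigma>) \<in> I \<times> {-1, 1}" using that \<open>i \<in> I\<close> by simp
  next
    fix p :: "'i \<times> real" and s :: real assume "p \<in> I \<times> {-1, 1}" "0 \<le> s"
    then show "(g p has_real_derivative g' p s) (at s within {0..})"
      by (auto simp: g_def g'_def intro!: DERIV_cmult deriv)
  next
    fix p :: "'i \<times> real" assume "p \<in> I \<times> {-1, 1}"
    then show "g p 0 \<le> K" using init by (force simp: g_def)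
  next
    fix p :: "'i \<times> real" and s assume "p \<in> I \<times> {-1, 1}" "0 \<le> s" and "\<forall>q\<in>I \<times> {-1, 1}. g q s \<le> g p s"
    then obtain j \<tau> where "p = (j, \<tau>)" "j \<in> I" "\<bar>\<tau>\<bar> = 1" "\<forall>l\<in>I. \<bar>h l s\<bar> \<le> \<tau> * h j s"
      by (fastforce simp: g_def abs_if)
    then show "g' p s \<le> 0" using at_max \<open>0 \<le> s\<close> by (simp add: g'_def)
  qed (use \<open>0 \<le> t\<close> in simp_all)
  from this[of 1] this[of "-1"] show ?thesis by (simp add: g_def)
qed

lemma weighted_mean_ge:
  fixes w a :: "'a \<Rightarrow> real"
  assumes "\<And>j. j \<in> A \<Longrightarrow> 0 \<le> w j" "sum w A = 1" "\<And>j. j \<in> A \<Longrightarrow> m \<le> a j"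
  shows "m \<le> (\<Sum>j\<in>A. w j * a j)"
proof -
  have "m = (\<Sum>j\<in>A. w j * m)" using assms(2) by (simp add: sum_distrib_right[symmetric])
  also have "\<dots> \<le> (\<Sum>j\<in>A. w j * a j)" using assms by (intro sum_mono mult_left_mono) auto
  finally show ?thesis .
qed

lemma weighted_mean_le:
  fixes w a :: "'a \<Rightarrow> real"
  assumes "\<And>j. j \<in> A \<Longrightarrow> 0 \<le> w j" "sum w A = 1" "\<And>j. j \<in> A \<Longrightarrow> a j \<le> m"
  shows "(\<Sum>j\<in>A. w j * a j) \<le> m"
  using weighted_mean_ge[of A w "- m" "\<lambda>j. - a j"] assms by (simp add: sum_negf)

locale orthonormal_eigenbasis =
  fixes V :: "real^'d^'d" and e :: "'d \<Rightarrow> real^'d" and lam :: "'d \<Rightarrow> real"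
  assumes orthonormal: "\<And>k l. e k \<bullet> e l = (if k = l then 1 else 0)"
    and eigen: "\<And>k. V *v e k = lam k *\<^sub>R e k"
begin

lemma expansion: "(\<Sum>k\<in>UNIV. (y \<bullet> e k) *\<^sub>R e k) = y"
proof -
  have "inj e" by (rule injI) (metis orthonormal zero_neq_one)
  have orth: "pairwise orthogonal (range e)"
    by (auto simp: pairwise_def orthogonal_def orthonormal)
  moreover have "0 \<notin> range e" by (metis imageE inner_zero_left orthonormal zero_neq_one)
  ultimately have "independent (range e)" by (rule pairwise_orthogonal_independent)
  moreover have "card (range e) = DIM(real^'d)" using \<open>inj e\<close> by (simp add: card_image)
  ultimately have "UNIV \<subseteq> span (range e)"
    by (intro card_ge_dim_independent) (simp_all add: dim_UNIV)
  then have "(\<Sum>v\<in>range e. (y \<bullet> v) *\<^sub>R v) = y"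
    by (intro orthonormal_basis_expand[OF orth]) (auto simp: norm_eq_sqrt_inner orthonormal)
  then show ?thesis using \<open>inj e\<close> by (simp add: sum.reindex)
qed

lemma inner_eq_sum_coords: "y \<bullet> z = (\<Sum>k\<in>UNIV. (y \<bullet> e k) * (z \<bullet> e k))"
proof -
  have "y \<bullet> z = y \<bullet> (\<Sum>k\<in>UNIV. (z \<bullet> e k) *\<^sub>R e k)" by (simp add: expansion)
  then show ?thesis by (simp add: inner_sum_right mult.commute)
qed

lemma norm_sq_eq_sum_coords: "(norm y)\<^sup>2 = (\<Sum>k\<in>UNIV. (y \<bullet> e k)\<^sup>2)"
  unfolding power2_norm_eq_inner inner_eq_sum_coords[of y y] by (simp add: power2_eq_square)

lemma norm_eigenvector: "norm (e k) = 1"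
  by (simp add: norm_eq_sqrt_inner orthonormal)

lemma coord_matrix_vector_mult: "(V *v y) \<bullet> e k = lam k * (y \<bullet> e k)"
proof -
  have "V *v y = V *v (\<Sum>l\<in>UNIV. (y \<bullet> e l) *\<^sub>R e l)" by (simp add: expansion)
  also have "\<dots> = (\<Sum>l\<in>UNIV. (y \<bullet> e l) *\<^sub>R lam l *\<^sub>R e l)"
    by (simp add: linear_sum[OF matrix_vector_mul_linear] matrix_vector_mult_scaleR eigen)
  finally show ?thesis by (simp add: inner_sum_left orthonormal if_distrib cong: if_cong)
qed

lemma quadratic_form: "y \<bullet> (V *v z) = (\<Sum>k\<in>UNIV. lam k * (y \<bullet> e k) * (z \<bullet> e k))"
  unfolding inner_eq_sum_coords[of y "V *v z"] coord_matrix_vector_mult by (simp add: algebra_simps)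

lemma norm_matrix_vector_mult_le:
  assumes "\<And>k. \<bar>lam k\<bar> \<le> L"
  shows "norm (V *v z) \<le> L * norm z"
proof (rule power2_le_imp_le)
  have "0 \<le> L" using assms[of undefined] abs_ge_zero order_trans by blast
  have "(norm (V *v z))\<^sup>2 = (\<Sum>k\<in>UNIV. (lam k)\<^sup>2 * (z \<bullet> e k)\<^sup>2)"
    by (simp add: norm_sq_eq_sum_coords[of "V *v z"] coord_matrix_vector_mult power_mult_distrib)
  also have "\<dots> \<le> (\<Sum>k\<in>UNIV. L\<^sup>2 * (z \<bullet> e k)\<^sup>2)"
    using assms \<open>0 \<le> L\<close> by (intro sum_mono mult_right_mono power2_le_iff_abs_le[THEN iffD2]) auto
  also have "\<dots> = (L * norm z)\<^sup>2"
    by (simp add: norm_sq_eq_sum_coords[of z] power_mult_distrib sum_distrib_left)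
  finally show "(norm (V *v z))\<^sup>2 \<le> (L * norm z)\<^sup>2" .
  show "0 \<le> L * norm z" using \<open>0 \<le> L\<close> by simp
qed

end

definition attn_weight :: "real \<Rightarrow> real^'d^'d \<Rightarrow> nat \<Rightarrow> (nat \<Rightarrow> real^'d) \<Rightarrow> nat \<Rightarrow> nat \<Rightarrow> real" where
  "attn_weight \<beta> V n y i j = exp (\<beta> * (y i \<bullet> (V *v y j))) / attnZ \<beta> V n y i"

lemma attnZ_pos: "0 < n \<Longrightarrow> 0 < attnZ \<beta> V n y i"
  unfolding attnZ_def by (intro sum_pos) auto

lemma attn_weight_pos: "0 < n \<Longrightarrow> 0 < attn_weight \<beta> V n y i j"
  by (simp add: attn_weight_def attnZ_pos)

lemma sum_attn_weight: "0 < n \<Longrightarrow> (\<Sum>j<n. attn_weight \<beta> V n y i j) = 1"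
  using attnZ_pos[of n \<beta> V y i]
  by (simp add: attn_weight_def attnZ_def sum_divide_distrib[symmetric])

lemma attn_field_eq:
  "attn_field \<beta> V n y i = (\<Sum>j<n. attn_weight \<beta> V n y i j *\<^sub>R (V *v y j))
     - (\<Sum>j<n. attn_weight \<beta> V n y i j * (y i \<bullet> (V *v y j))) *\<^sub>R y i"
  by (simp add: attn_field_def tproj_def attn_weight_def scaleR_sum_right inner_sum_right
      sum_divide_distrib)

lemma (in orthonormal_eigenbasis) attn_field_coord:
  "attn_field \<beta> V n y i \<bullet> e k = lam k * (\<Sum>j<n. attn_weight \<beta> V n y i j * (y j \<bullet> e k))
     - (\<Sum>j<n. attn_weight \<beta> V n y i j * (y i \<bullet> (V *v y j))) * (y i \<bullet> e k)"
  by (simp add: attn_field_eq inner_diff_left inner_sum_left coord_matrix_vector_mult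
      sum_distrib_left algebra_simps)

locale attention_flow = orthonormal_eigenbasis V e lam
  for V :: "real^'d^'d" and e lam +
  fixes \<beta> :: real and n :: nat and x :: "nat \<Rightarrow> real \<Rightarrow> real^'d"
  assumes n_pos: "0 < n"
    and on_sphere: "\<And>i t. i < n \<Longrightarrow> 0 \<le> t \<Longrightarrow> norm (x i t) = 1"
    and ode: "\<And>i t. i < n \<Longrightarrow> 0 \<le> t \<Longrightarrow>
               (x i has_vector_derivative attn_field \<beta> V n (\<lambda>j. x j t) i) (at t within {0..})"
begin

definition coord :: "nat \<Rightarrow> 'd \<Rightarrow> real \<Rightarrow> real" where
  "coord i k t = x i t \<bullet> e k"

definition weight :: "nat \<Rightarrow> nat \<Rightarrow> real \<Rightarrow> real" where
  "weight i j t = attn_weight \<beta> V n (\<lambda>l. x l t) i j"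

definition coord_velocity :: "nat \<Rightarrow> 'd \<Rightarrow> real \<Rightarrow> real" where
  "coord_velocity i k t = lam k * (\<Sum>j<n. weight i j t * coord j k t)
     - (\<Sum>j<n. weight i j t * (x i t \<bullet> (V *v x j t))) * coord i k t"

lemma weight_pos: "0 < weight i j t"
  by (simp add: weight_def attn_weight_pos n_pos)

lemma sum_weight: "(\<Sum>j<n. weight i j t) = 1"
  by (simp add: weight_def sum_attn_weight n_pos)

lemma sum_coord_sq: "i < n \<Longrightarrow> 0 \<le> t \<Longrightarrow> (\<Sum>k\<in>UNIV. (coord i k t)\<^sup>2) = 1"
  using norm_sq_eq_sum_coords[of "x i t"] on_sphere by (simp add: coord_def)

lemma abs_coord_le_1: "i < n \<Longrightarrow> 0 \<le> t \<Longrightarrow> \<bar>coord i k t\<bar> \<le> 1"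
  using Cauchy_Schwarz_ineq2[of "x i t" "e k"] on_sphere by (simp add: coord_def norm_eigenvector)

lemma coord_has_derivative:
  assumes "i < n" "0 \<le> t"
  shows "(coord i k has_real_derivative coord_velocity i k t) (at t within {0..})"
proof -
  have "((\<lambda>s. x i s \<bullet> e k) has_vector_derivative attn_field \<beta> V n (\<lambda>j. x j t) i \<bullet> e k)
          (at t within {0..})"
    by (rule bounded_linear.has_vector_derivative[OF bounded_linear_inner_left ode[OF assms]])
  then show ?thesis
    by (simp add: has_real_derivative_iff_has_vector_derivative coord_def[abs_def]
        attn_field_coord coord_velocity_def weight_def)
qed

end

locale attention_flow_gap = attention_flow V e lam \<beta> n x
  for V :: "real^'d^'d" and e lam \<beta> n x +
  fixes k1 :: 'd
  assumes gap: "\<And>k. k \<noteq> k1 \<Longrightarrow> \<bar>lam k\<bar> < lam k1"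
begin

lemma top_coord_velocity_nonneg_at_min:
  assumes "i < n" "0 \<le> t" "0 < coord i k1 t" and min: "\<And>j. j < n \<Longrightarrow> coord i k1 t \<le> coord j k1 t"
  shows "0 \<le> coord_velocity i k1 t"
proof -
  define \<sigma> where "\<sigma> = (\<Sum>j<n. weight i j t * (x i t \<bullet> (V *v x j t)))"
  define m where "m = (\<Sum>j<n. weight i j t * coord j k1 t)"
  have "coord i k1 t \<le> m"
    unfolding m_def using min by (intro weighted_mean_ge) (auto simp: sum_weight less_imp_le weight_pos)
  have "\<sigma> * coord i k1 t \<le> lam k1 * m"
  proof (cases "\<exists>k. k \<noteq> k1")
    case True
    then have top: "\<bar>lam l\<bar> \<le> lam k1" for l using gap by (cases "l = k1") force+
    have "x i t \<bullet> (V *v x j t) \<le> lam k1" if "j < n" for j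
    proof -
      have "x i t \<bullet> (V *v x j t) \<le> norm (x i t) * norm (V *v x j t)" by (rule norm_cauchy_schwarz)
      also have "\<dots> \<le> lam k1"
        using norm_matrix_vector_mult_le[OF top, of "x j t"] on_sphere that \<open>i < n\<close> \<open>0 \<le> t\<close> by simp
      finally show ?thesis .
    qed
    then have "\<sigma> \<le> lam k1"
      unfolding \<sigma>_def by (intro weighted_mean_le) (auto simp: sum_weight less_imp_le weight_pos)
    then have "\<sigma> * coord i k1 t \<le> lam k1 * coord i k1 t"
      using \<open>0 < coord i k1 t\<close> by simp
    also have "\<dots> \<le> lam k1 * m"
      using \<open>coord i k1 t \<le> m\<close> top[of k1] by (intro mult_left_mono) auto
    finally show ?thesis .
  next
    case False
    \<comment> \<open>In dimension one \<open>lam k1\<close> may be negative, but then \<open>coord_velocity i k1 t = 0\<close>.\<close>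
    then have U: "UNIV = {k1}" by auto
    have "x i t \<bullet> (V *v x j t) = lam k1 * coord i k1 t * coord j k1 t" for j
      unfolding quadratic_form U by (simp add: coord_def)
    then have "\<sigma> * coord i k1 t = lam k1 * m * (coord i k1 t)\<^sup>2"
      by (simp add: \<sigma>_def m_def sum_distrib_left sum_distrib_right power2_eq_square algebra_simps)
    moreover have "(coord i k1 t)\<^sup>2 = 1"
      using sum_coord_sq[OF \<open>i < n\<close> \<open>0 \<le> t\<close>] unfolding U by simp
    ultimately show ?thesis by simp
  qed
  then show ?thesis by (simp add: coord_velocity_def \<sigma>_def m_def)
qed

lemma cone_invariant:
  assumes "0 < \<delta>" and "\<And>i. i < n \<Longrightarrow> \<delta> \<le> coord i k1 0" and "i < n" "0 \<le> t"
  shows "\<delta> \<le> coord i k1 t"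
proof -
  have "- coord i k1 t \<le> - \<delta>"
  proof (rule maximum_principle[where I = "{..<n}" and g = "\<lambda>i t. - coord i k1 t"
        and g' = "\<lambda>i t. - coord_velocity i k1 t" and \<eta> = \<delta>])
    fix j s assume "j \<in> {..<n}" "0 \<le> (s::real)" "\<forall>l\<in>{..<n}. - coord l k1 s \<le> - coord j k1 s"
      and "- coord j k1 s < - \<delta> + \<delta>"
    then show "- coord_velocity j k1 s \<le> 0"
      using top_coord_velocity_nonneg_at_min by simp
  qed (use assms in \<open>auto intro: DERIV_minus coord_has_derivative\<close>)
  then show ?thesis by simp
qed

definition ratio :: "nat \<Rightarrow> 'd \<Rightarrow> real \<Rightarrow> real" where
  "ratio i k t = coord i k t / coord i k1 t"

definition ratio_velocity :: "nat \<Rightarrow> 'd \<Rightarrow> real \<Rightarrow> real" where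
  "ratio_velocity i k t =
     (\<Sum>j<n. weight i j t * coord j k1 t * (lam k * ratio j k t - lam k1 * ratio i k t)) / coord i k1 t"

lemma ratio_has_derivative:
  assumes "i < n" "0 \<le> t" and nonzero: "\<And>j. j < n \<Longrightarrow> coord j k1 t \<noteq> 0"
  shows "(ratio i k has_real_derivative ratio_velocity i k t) (at t within {0..})"
proof -
  define c where "c = coord i k1 t"
  define A where "A = (\<Sum>j<n. weight i j t * coord j k t)"
  define B where "B = (\<Sum>j<n. weight i j t * coord j k1 t)"
  have "c \<noteq> 0" using nonzero \<open>i < n\<close> by (simp add: c_def)
  have derivative: "(ratio i k has_real_derivative
          (coord_velocity i k t * c - coord i k t * coord_velocity i k1 t) / (c * c)) (at t within {0..})"
    unfolding ratio_def[abs_def] c_def using assms by (intro DERIV_divide coord_has_derivative) auto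
  have "(\<Sum>j<n. weight i j t * coord j k1 t * (lam k * ratio j k t - lam k1 * ratio i k t))
        = lam k * A - lam k1 * ratio i k t * B"
    using nonzero by (simp add: A_def B_def ratio_def sum_subtractf sum_distrib_left algebra_simps)
  then have "ratio_velocity i k t = (lam k * A - lam k1 * (coord i k t / c) * B) / c"
    by (simp add: ratio_velocity_def ratio_def c_def)
  also have "\<dots> = (lam k * A * c - lam k1 * coord i k t * B) / (c * c)"
    using \<open>c \<noteq> 0\<close> by (simp add: field_simps)
  \<comment> \<open>The self-interaction term of \<open>coord_velocity\<close> cancels in the quotient.\<close>
  also have "\<dots> = (coord_velocity i k t * c - coord i k t * coord_velocity i k1 t) / (c * c)"
    by (simp add: coord_velocity_def A_def B_def c_def algebra_simps)
  finally show ?thesis using derivative by simp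
qed

context
  fixes \<delta> :: real
  assumes delta_pos: "0 < \<delta>" and cone: "\<And>i t. i < n \<Longrightarrow> 0 \<le> t \<Longrightarrow> \<delta> \<le> coord i k1 t"
begin

lemma ratio_velocity_le_at_max:
  assumes "k \<noteq> k1" "i < n" "0 \<le> t" "\<bar>\<sigma>\<bar> = 1" and max: "\<And>j. j < n \<Longrightarrow> \<bar>ratio j k t\<bar> \<le> \<sigma> * ratio i k t"
  shows "\<sigma> * ratio_velocity i k t \<le> - (\<delta> * (lam k1 - \<bar>lam k\<bar>)) * (\<sigma> * ratio i k t)"
proof -
  define \<rho> where "\<rho> = \<sigma> * ratio i k t"
  define B where "B = (\<Sum>j<n. weight i j t * coord j k1 t)"
  define c where "c = coord i k1 t"
  have "0 \<le> \<rho>" using max[OF \<open>i < n\<close>] by (simp add: \<rho>_def)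
  have "0 < c" "c \<le> 1"
    using cone[OF \<open>i < n\<close> \<open>0 \<le> t\<close>] abs_coord_le_1[OF \<open>i < n\<close> \<open>0 \<le> t\<close>, of k1] delta_pos
    by (auto simp: c_def)
  have "\<delta> \<le> B"
    unfolding B_def using cone \<open>0 \<le> t\<close>
    by (intro weighted_mean_ge) (auto simp: sum_weight less_imp_le weight_pos)
  also have "\<dots> \<le> B / c"
    using \<open>\<delta> \<le> B\<close> \<open>0 < c\<close> \<open>c \<le> 1\<close> delta_pos by (simp add: le_divide_eq mult_left_le)
  finally have "\<delta> \<le> B / c" .
  have termwise: "\<sigma> * (lam k * ratio j k t - lam k1 * ratio i k t) \<le> (\<bar>lam k\<bar> - lam k1) * \<rho>"
    if "j < n" for j
  proof -
    have "\<sigma> * lam k * ratio j k t \<le> \<bar>\<sigma> * lam k * ratio j k t\<bar>" by (rule abs_ge_self)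
    also have "\<dots> = \<bar>lam k\<bar> * \<bar>ratio j k t\<bar>" using \<open>\<bar>\<sigma>\<bar> = 1\<close> by (simp add: abs_mult)
    also have "\<dots> \<le> \<bar>lam k\<bar> * \<rho>" using max[OF that] by (simp add: \<rho>_def mult_left_mono)
    finally show ?thesis by (simp add: \<rho>_def algebra_simps)
  qed
  have weighted_nonneg: "0 \<le> weight i j t * coord j k1 t" if "j < n" for j
    using weight_pos[of i j t] cone[OF that \<open>0 \<le> t\<close>] delta_pos by simp
  have "\<sigma> * ratio_velocity i k t
        = (\<Sum>j<n. weight i j t * coord j k1 t * (\<sigma> * (lam k * ratio j k t - lam k1 * ratio i k t))) / c"
    by (simp add: ratio_velocity_def c_def sum_distrib_left algebra_simps)
  also have "\<dots> \<le> (\<Sum>j<n. weight i j t * coord j k1 t * ((\<bar>lam k\<bar> - lam k1) * \<rho>)) / c"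
    using termwise weighted_nonneg \<open>0 < c\<close> by (intro divide_right_mono sum_mono mult_left_mono) auto
  also have "\<dots> = B * ((\<bar>lam k\<bar> - lam k1) * \<rho>) / c"
    unfolding B_def by (simp add: sum_distrib_right)
  also have "\<dots> = (\<bar>lam k\<bar> - lam k1) * \<rho> * (B / c)"
    by simp
  also have "\<dots> \<le> (\<bar>lam k\<bar> - lam k1) * \<rho> * \<delta>"
    using \<open>\<delta> \<le> B / c\<close> gap[OF \<open>k \<noteq> k1\<close>] \<open>0 \<le> \<rho>\<close>
    by (intro mult_left_mono_neg) (simp_all add: mult_nonpos_nonneg)
  finally show ?thesis by (simp add: \<rho>_def algebra_simps)
qed

lemma ratio_decay:
  assumes "k \<noteq> k1" "i < n" "0 \<le> t"
  shows "\<bar>ratio i k t\<bar> \<le> (MAX j\<in>{..<n}. \<bar>ratio j k 0\<bar>) * exp (- \<delta> * (lam k1 - \<bar>lam k\<bar>) * t)"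
proof -
  define \<mu> where "\<mu> = \<delta> * (lam k1 - \<bar>lam k\<bar>)"
  have nonzero: "coord j k1 s \<noteq> 0" if "j < n" "0 \<le> s" for j s
    using cone[OF that] delta_pos by simp
  have "\<bar>exp (\<mu> * t) * ratio i k t\<bar> \<le> (MAX j\<in>{..<n}. \<bar>ratio j k 0\<bar>)"
  proof (rule maximum_principle_abs[where I = "{..<n}" and h = "\<lambda>j s. exp (\<mu> * s) * ratio j k s"
        and h' = "\<lambda>j s. exp (\<mu> * s) * (\<mu> * ratio j k s + ratio_velocity j k s)"])
    fix j s assume "j \<in> {..<n}" "0 \<le> (s::real)"
    then show "((\<lambda>s. exp (\<mu> * s) * ratio j k s) has_real_derivative
                 exp (\<mu> * s) * (\<mu> * ratio j k s + ratio_velocity j k s)) (at s within {0..})"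
      using nonzero by (auto intro!: derivative_eq_intros ratio_has_derivative simp: algebra_simps)
  next
    fix j assume "j \<in> {..<n}"
    then show "\<bar>exp (\<mu> * 0) * ratio j k 0\<bar> \<le> (MAX j\<in>{..<n}. \<bar>ratio j k 0\<bar>)" by simp
  next
    fix j \<sigma> s assume "j \<in> {..<n}" "0 \<le> s" "\<bar>\<sigma>\<bar> = 1"
      and "\<forall>l\<in>{..<n}. \<bar>exp (\<mu> * s) * ratio l k s\<bar> \<le> \<sigma> * (exp (\<mu> * s) * ratio j k s)"
    then have "\<forall>l<n. \<bar>ratio l k s\<bar> \<le> \<sigma> * ratio j k s"
      by (simp add: abs_mult mult.left_commute[of \<sigma>])
    then have "\<sigma> * ratio_velocity j k s \<le> - \<mu> * (\<sigma> * ratio j k s)"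
      unfolding \<mu>_def using \<open>j \<in> {..<n}\<close> \<open>0 \<le> s\<close> \<open>\<bar>\<sigma>\<bar> = 1\<close> assms(1)
      by (intro ratio_velocity_le_at_max) auto
    then have "exp (\<mu> * s) * (\<mu> * (\<sigma> * ratio j k s) + \<sigma> * ratio_velocity j k s) \<le> 0"
      by (simp add: mult_nonneg_nonpos)
    then show "\<sigma> * (exp (\<mu> * s) * (\<mu> * ratio j k s + ratio_velocity j k s)) \<le> 0"
      by (simp add: algebra_simps)
  qed (use assms in auto)
  then have "\<bar>ratio i k t\<bar> \<le> (MAX j\<in>{..<n}. \<bar>ratio j k 0\<bar>) / exp (\<mu> * t)"
    by (simp add: abs_mult field_simps)
  then show ?thesis by (simp add: \<mu>_def exp_minus divide_inverse)
qed

lemma coord_tendsto_zero: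
  assumes "k \<noteq> k1" "i < n"
  shows "(coord i k \<longlongrightarrow> 0) at_top"
proof (rule Lim_null_comparison)
  define R where "R = (MAX j\<in>{..<n}. \<bar>ratio j k 0\<bar>)"
  show "eventually (\<lambda>t. norm (coord i k t) \<le> R * exp (- \<delta> * (lam k1 - \<bar>lam k\<bar>) * t)) at_top"
    using eventually_ge_at_top[of 0]
  proof eventually_elim
    case (elim t)
    have "0 < coord i k1 t" "coord i k1 t \<le> 1"
      using cone[OF \<open>i < n\<close> elim] abs_coord_le_1[OF \<open>i < n\<close> elim, of k1] delta_pos by auto
    then have "\<bar>coord i k t\<bar> \<le> \<bar>ratio i k t\<bar>"
      by (simp add: ratio_def abs_divide le_divide_eq mult_left_le)
    also have "\<dots> \<le> R * exp (- \<delta> * (lam k1 - \<bar>lam k\<bar>) * t)"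
      unfolding R_def using assms elim by (rule ratio_decay)
    finally show ?case by simp
  qed
  show "((\<lambda>t. R * exp (- \<delta> * (lam k1 - \<bar>lam k\<bar>) * t)) \<longlongrightarrow> 0) at_top"
    using delta_pos gap[OF \<open>k \<noteq> k1\<close>] by real_asymp
qed

lemma top_coord_tendsto_one:
  assumes "i < n"
  shows "(coord i k1 \<longlongrightarrow> 1) at_top"
proof -
  have "((\<lambda>t. sqrt (1 - (\<Sum>k\<in>-{k1}. (coord i k t)\<^sup>2))) \<longlongrightarrow> sqrt (1 - (\<Sum>k\<in>-{k1}. 0\<^sup>2))) at_top"
    using assms by (intro tendsto_intros coord_tendsto_zero) auto
  moreover have "eventually (\<lambda>t. sqrt (1 - (\<Sum>k\<in>-{k1}. (coord i k t)\<^sup>2)) = coord i k1 t) at_top"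
    using eventually_ge_at_top[of 0]
  proof eventually_elim
    case (elim t)
    have "(coord i k1 t)\<^sup>2 + (\<Sum>k\<in>-{k1}. (coord i k t)\<^sup>2) = 1"
      using sum_coord_sq[OF assms elim] by (simp add: sum.remove[of UNIV k1] Compl_eq_Diff_UNIV)
    moreover have "0 \<le> coord i k1 t" using cone[OF assms elim] delta_pos by simp
    ultimately show ?case by (simp add: real_sqrt_unique eq_diff_eq')
  qed
  ultimately show ?thesis by (simp add: tendsto_cong)
qed

lemma tendsto_top_eigenvector:
  assumes "i < n"
  shows "(x i \<longlongrightarrow> e k1) at_top"
proof -
  have "((\<lambda>t. coord i k t *\<^sub>R e k) \<longlongrightarrow> (if k = k1 then e k else 0)) at_top" for k
    using tendsto_scaleR[OF top_coord_tendsto_one[OF assms] tendsto_const, of "e k1"]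
      tendsto_scaleR[OF coord_tendsto_zero[OF _ assms] tendsto_const, of k "e k"]
    by (cases "k = k1") auto
  then have "((\<lambda>t. \<Sum>k\<in>UNIV. coord i k t *\<^sub>R e k) \<longlongrightarrow> (\<Sum>k\<in>UNIV. if k = k1 then e k else 0)) at_top"
    by (rule tendsto_sum)
  then show ?thesis by (simp add: coord_def expansion)
qed

end

end

theorem theorem6p1:
  fixes \<beta> \<delta> :: real and V :: "real^'d^'d"
    and e :: "'d \<Rightarrow> real^'d" and lam :: "'d \<Rightarrow> real" and k1 :: 'd
    and n :: nat and x :: "nat \<Rightarrow> real \<Rightarrow> real^'d"
  assumes beta_pos: "\<beta> > 0"
    and V_sym: "transpose V = V"
    and e_orthonormal: "\<And>k l. e k \<bullet> e l = (if k = l then 1 else 0)"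
    and e_eigen: "\<And>k. V *v e k = lam k *\<^sub>R e k"
    and gap: "\<And>k. k \<noteq> k1 \<Longrightarrow> lam k1 > \<bar>lam k\<bar>"
    and n_pos: "n > 0"
    and on_sphere: "\<And>i t. i < n \<Longrightarrow> t \<ge> 0 \<Longrightarrow> norm (x i t) = 1"
    and ode: "\<And>i t. i < n \<Longrightarrow> t \<ge> 0 \<Longrightarrow>
               (x i has_vector_derivative attn_field \<beta> V n (\<lambda>j. x j t) i) (at t within {0..})"
    and delta_pos: "\<delta> > 0"
    and init: "\<And>i. i < n \<Longrightarrow> x i 0 \<bullet> e k1 \<ge> \<delta>"
  shows "(\<forall>t\<ge>0. \<forall>i<n. x i t \<bullet> e k1 \<ge> \<delta>)
     \<and> (\<forall>k. k \<noteq> k1 \<longrightarrow> (\<forall>t\<ge>0.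
           (MAX i\<in>{..<n}. \<bar>(x i t \<bullet> e k) / (x i t \<bullet> e k1)\<bar>)
             \<le> (MAX i\<in>{..<n}. \<bar>(x i 0 \<bullet> e k) / (x i 0 \<bullet> e k1)\<bar>)
                * exp (- \<delta> * (lam k1 - \<bar>lam k\<bar>) * t)))
     \<and> (\<forall>i<n. (x i \<longlongrightarrow> e k1) at_top)"
proof -
  interpret attention_flow_gap V e lam \<beta> n x k1
    by unfold_locales (use e_orthonormal e_eigen n_pos on_sphere ode gap in auto)
  have cone: "\<delta> \<le> coord i k1 t" if "i < n" "0 \<le> t" for i t
    using cone_invariant[OF delta_pos _ that] init by (simp add: coord_def)
  show ?thesis
  proof (intro conjI allI impI)
    show "\<delta> \<le> x i t \<bullet> e k1" if "0 \<le> t" "i < n" for i t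
      using cone that by (simp add: coord_def)
    show "(x i \<longlongrightarrow> e k1) at_top" if "i < n" for i
      using tendsto_top_eigenvector[OF delta_pos cone that] by simp
    fix k t assume "k \<noteq> k1" "0 \<le> (t::real)"
    then show "(MAX i\<in>{..<n}. \<bar>(x i t \<bullet> e k) / (x i t \<bullet> e k1)\<bar>)
             \<le> (MAX i\<in>{..<n}. \<bar>(x i 0 \<bullet> e k) / (x i 0 \<bullet> e k1)\<bar>)
                * exp (- \<delta> * (lam k1 - \<bar>lam k\<bar>) * t)"
      using ratio_decay[OF delta_pos cone] n_pos
      by (intro Max.boundedI) (auto simp: ratio_def coord_def)
  qed
qed

end
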